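(* A function $h\colon\operatorname{AdS}_n\to\mathbb{Z}$ is equal to $h_D$ for some delta-matroid $D$ on $[n,\overline{n}]$ if and only if (1) $h(\emptyset)=0$; (2) $h(S)\in\{0,1\}$ for every $S\in\operatorname{AdS}_n$ with $|S|=1$; (3) $h(S)+h(T)\ge h(S\cap T)+h(S\sqcup T)+|S\cap\overline{T}|/2$ for all $S,T\in\operatorname{AdS}_n$.
   Context: Let $[n,\overline{n}]=\{1,\dots,n,\overline{1},\dots,\overline{n}\}$ with involution $a\mapsto\overline{a}$; $\overline{S}=\{\overline{a}:a\in S\}$. A subset is admissible if it contains at most one of $i,\overline{i}$ for each $i$; $\operatorname{AdS}_n$ is the set of admissible subsets. For $S,T\in\operatorname{AdS}_n$, $S\sqcup T=\{a\in S\cup T:\overline{a}\notin S\cup T\}$. In $\mathbb{R}^n$ set $e_{\overline{i}}=-e_i$, $e_S=\sum_{a\in S}e_a$. A delta-matroid $D$ on $[n,\overline{n}]$ is a nonempty collection $\mathcal{F}$ of admissible sets of size $n$ (feasible sets) such that $\operatorname{Conv}\{e_B:B\in\mathcal{F}\}$ has all edges parallel to some $e_i$ or $e_i\pm e_j$. Its rank function is $g_D(S)=\max_{B\in\mathcal{F}}(|S\cap B|-|\overline{S}\cap B|)$, and $h_D(S):=\frac{g_D(S)+|S|}{2}$ for $S\in\operatorname{AdS}_n$. *)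

theory Defs
  imports "HOL-Analysis.Analysis"
begin

text \<open>The ground set [n, nbar] is modelled as the type 'n \<times> bool, where
  'n is a finite type with CARD('n) = n: (i, True) stands for i and
  (i, False) stands for nbar i.\<close>

definition bar :: "'n \<times> bool \<Rightarrow> 'n \<times> bool" where
  "bar a = (fst a, \<not> snd a)"

definition barset :: "('n \<times> bool) set \<Rightarrow> ('n \<times> bool) set" where
  "barset S = bar ` S"

definition admissible :: "('n \<times> bool) set \<Rightarrow> bool" where
  "admissible S \<longleftrightarrow> (\<forall>a\<in>S. bar a \<notin> S)"

definition sqcup :: "('n \<times> bool) set \<Rightarrow> ('n \<times> bool) set \<Rightarrow> ('n \<times> bool) set" where
  "sqcup S T = {a \<in> S \<union> T. bar a \<notin> S \<union> T}"

definition evec :: "('n::finite) \<times> bool \<Rightarrow> real^'n" where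
  "evec a = (if snd a then 1 else -1) *\<^sub>R axis (fst a) 1"

definition eset :: "('n::finite \<times> bool) set \<Rightarrow> real^'n" where
  "eset S = (\<Sum>a\<in>S. evec a)"

definition is_poly_edge :: "(real^'n::finite) set \<Rightarrow> (real^'n) set \<Rightarrow> bool" where
  "is_poly_edge E P \<longleftrightarrow> E face_of P \<and> aff_dim E = 1"

definition parallel_to :: "(real^'n::finite) set \<Rightarrow> real^'n \<Rightarrow> bool" where
  "parallel_to E v \<longleftrightarrow> (\<forall>x\<in>E. \<forall>y\<in>E. \<exists>c::real. x - y = c *\<^sub>R v)"

definition delta_matroid :: "('n::finite \<times> bool) set set \<Rightarrow> bool" where
  "delta_matroid F \<longleftrightarrow>
     F \<noteq> {} \<and>
     (\<forall>B\<in>F. admissible B \<and> card B = CARD('n)) \<and>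
     (\<forall>E. is_poly_edge E (convex hull (eset ` F)) \<longrightarrow>
        (\<exists>i. parallel_to E (axis i 1)) \<or>
        (\<exists>i j. i \<noteq> j \<and> (parallel_to E (axis i 1 + axis j 1)
                           \<or> parallel_to E (axis i 1 - axis j 1))))"

definition rank_g :: "('n::finite \<times> bool) set set \<Rightarrow> ('n \<times> bool) set \<Rightarrow> int" where
  "rank_g F S = Max ((\<lambda>B. int (card (S \<inter> B)) - int (card (barset S \<inter> B))) ` F)"

definition rank_h :: "('n::finite \<times> bool) set set \<Rightarrow> ('n \<times> bool) set \<Rightarrow> real" where
  "rank_h F S = (real_of_int (rank_g F S) + real (card S)) / 2"

end

theory Submission
  imports Defs
begin

text \<open>
  The rank g(S) of a delta-matroid is the maximum of the functional e_S over the vertices e_B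
  of its polytope.  Since e_S + e_T = e_(S \<inter> T) + e_(S \<squnion> T), where the second summand
  extends the first with the same signs, some vertex maximises both summands at once: at a
  vertex maximising their sum, an edge improving one summand would flip at most two
  coordinates and therefore improve the sum as well.  This gives
  g(S) + g(T) \<ge> g(S \<inter> T) + g(S \<squnion> T), and (3) follows by counting.

  Conversely, (1)-(3) make h behave like a matroid rank function on every admissible set,
  with 2 h(S) + 1 \<le> h(S + a) + h(S + abar).  The transversals B with h(B) = n are the
  feasible sets of the required delta-matroid: its rank at S is attained at a transversal
  extending a maximal independent subset of S, and the transversals satisfy a symmetric
  exchange property that forces every edge of their polytope to flip at most two coordinates.
\<close>

section \<open>Signed sets and their vectors\<close>

lemma bar_bar [simp]: "bar (bar a) = a"
  by (simp add: bar_def)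

lemma bar_Pair [simp]: "bar (k, b) = (k, \<not> b)"
  by (simp add: bar_def)

lemma bar_neq [simp]: "bar a \<noteq> a"
  by (simp add: bar_def prod_eq_iff)

lemma bar_eq_iff [simp]: "bar a = bar b \<longleftrightarrow> a = b"
  by (metis bar_bar)

lemma mem_barset [simp]: "x \<in> barset S \<longleftrightarrow> bar x \<in> S"
  by (auto simp: barset_def image_iff) (metis bar_bar)

lemma admissible_iff: "admissible S \<longleftrightarrow> (\<forall>k. (k, True) \<notin> S \<or> (k, False) \<notin> S)"
  unfolding admissible_def bar_def by auto (metis (full_types))

lemma admissible_empty [simp]: "admissible {}"
  by (simp add: admissible_def)

lemma admissible_subset: "admissible T \<Longrightarrow> S \<subseteq> T \<Longrightarrow> admissible S"
  unfolding admissible_def by blast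

lemma admissible_insert: "admissible S \<Longrightarrow> bar a \<notin> S \<Longrightarrow> admissible (insert a S)"
  unfolding admissible_def by auto

lemma admissible_sqcup [simp]: "admissible (sqcup S T)"
  unfolding sqcup_def admissible_def by auto

lemma sqcup_eq_Un: "admissible (S \<union> T) \<Longrightarrow> sqcup S T = S \<union> T"
  unfolding admissible_def sqcup_def by auto

lemma Int_subset_sqcup: "admissible S \<Longrightarrow> admissible T \<Longrightarrow> S \<inter> T \<subseteq> sqcup S T"
  unfolding admissible_def sqcup_def by auto

lemma card_Int_sqcup_le: "card (S \<inter> T) + card (sqcup S T) + card (S \<inter> barset T) \<le> card S + card T"
  for S T :: "('n::finite \<times> bool) set"
proof -
  have "sqcup S T \<inter> (S \<inter> barset T) = {}"
    unfolding sqcup_def by auto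
  then have "card (sqcup S T) + card (S \<inter> barset T) = card (sqcup S T \<union> (S \<inter> barset T))"
    by (simp add: card_Un_disjoint)
  also have "\<dots> \<le> card (S \<union> T)"
    by (rule card_mono) (auto simp: sqcup_def)
  finally show ?thesis
    using card_Un_Int[of S T] by simp
qed

definition transversal :: "('n \<Rightarrow> bool) \<Rightarrow> ('n \<times> bool) set" where
  "transversal s = range (\<lambda>k. (k, s k))"

lemma mem_transversal [simp]: "(k, b) \<in> transversal s \<longleftrightarrow> b = s k"
  unfolding transversal_def by auto

lemma admissible_transversal [simp]: "admissible (transversal s)"
  unfolding admissible_iff by simp

lemma card_transversal [simp]: "card (transversal (s :: 'n::finite \<Rightarrow> bool)) = CARD('n)"
  unfolding transversal_def by (subst card_image) (auto simp: inj_on_def)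

lemma inj_on_fst_admissible: "admissible S \<Longrightarrow> inj_on fst S"
  unfolding inj_on_def admissible_iff by (metis (full_types) prod.collapse)

lemma card_admissible_le: "admissible (S :: ('n::finite \<times> bool) set) \<Longrightarrow> card S \<le> CARD('n)"
  using card_image[OF inj_on_fst_admissible] card_mono[of UNIV "fst ` S"] by fastforce

lemma admissible_card_less:
  fixes S :: "('n::finite \<times> bool) set"
  assumes "admissible S" "card S < CARD('n)"
  obtains k where "(k, True) \<notin> S" "(k, False) \<notin> S"
proof -
  have "fst ` S \<noteq> UNIV"
    using assms card_image[OF inj_on_fst_admissible] by force
  then obtain k where "k \<notin> fst ` S" by blast
  then show thesis
    using that by force
qed

lemma admissible_card_eq_transversal:
  fixes B :: "('n::finite \<times> bool) set"
  assumes "admissible B" "card B = CARD('n)"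
  shows "B = transversal (\<lambda>k. (k, True) \<in> B)"
proof -
  have "card (fst ` B) = CARD('n)"
    using assms card_image[OF inj_on_fst_admissible[OF assms(1)]] by simp
  then have "fst ` B = UNIV"
    by (simp add: card_eq_UNIV_imp_eq_UNIV)
  have "(k, True) \<in> B \<or> (k, False) \<in> B" for k
  proof -
    obtain x where "x \<in> B" "fst x = k"
      using \<open>fst ` B = UNIV\<close> by (metis UNIV_I imageE)
    then show ?thesis
      by (cases x, cases "snd x") auto
  qed
  moreover have "\<not> ((k, True) \<in> B \<and> (k, False) \<in> B)" for k
    using assms(1) unfolding admissible_iff by blast
  ultimately have "(k, b) \<in> B \<longleftrightarrow> (k, b) \<in> transversal (\<lambda>k. (k, True) \<in> B)" for k b
    by (cases b) (simp_all, blast)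
  then show ?thesis
    by (metis prod.collapse set_eqI)
qed

lemma card_barset_Int_transversal:
  fixes S :: "('n::finite \<times> bool) set"
  shows "card (barset S \<inter> transversal s) = card S - card (S \<inter> transversal s)"
proof -
  have "x \<in> barset S \<inter> transversal s \<longleftrightarrow> x \<in> bar ` (S - transversal s)" for x
    by (cases x) (auto simp: image_iff intro!: bexI[of _ "bar x"])
  then have "barset S \<inter> transversal s = bar ` (S - transversal s)"
    by blast
  then have "card (barset S \<inter> transversal s) = card (S - transversal s)"
    by (simp add: card_image inj_on_def)
  also have "\<dots> = card S - card (S \<inter> transversal s)"
    by (simp add: card_Diff_subset_Int Int_commute)
  finally show ?thesis .
qed

lemma evec_nth: "evec a $ k = (if fst a = k then (if snd a then 1 else -1) else 0)"
  by (simp add: evec_def axis_def)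

lemma eset_nth: "eset X $ k = (if (k, True) \<in> X then 1 else 0) - (if (k, False) \<in> X then 1 else 0)"
proof -
  have "eset X $ k = (\<Sum>a\<in>X. evec a $ k)"
    by (simp add: eset_def)
  also have "\<dots> = (\<Sum>a\<in>X \<inter> {(k, True), (k, False)}. evec a $ k)"
    by (rule sum.mono_neutral_right) (auto simp: evec_nth)
  also have "\<dots> = (if (k, True) \<in> X then 1 else 0) - (if (k, False) \<in> X then 1 else 0)"
    by (cases "(k, True) \<in> X"; cases "(k, False) \<in> X") (auto simp: evec_nth Int_insert_right)
  finally show ?thesis .
qed

lemma eset_transversal_nth: "eset (transversal s) $ k = (if s k then 1 else -1)"
  by (simp add: eset_nth)

lemma real_card_eq_sum_pairs:
  fixes X :: "('n::finite \<times> bool) set"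
  shows "real (card X) = (\<Sum>k\<in>UNIV. (if (k, True) \<in> X then 1 else 0) + (if (k, False) \<in> X then 1 else 0))"
proof -
  have "real (card X) = (\<Sum>a\<in>UNIV \<times> UNIV. if a \<in> X then 1 else 0)"
    by (simp add: sum.If_cases UNIV_Times_UNIV)
  also have "\<dots> = (\<Sum>k\<in>UNIV. \<Sum>b\<in>UNIV. if (k, b) \<in> X then 1 else 0)"
    by (simp add: sum.cartesian_product)
  also have "\<dots> = (\<Sum>k\<in>UNIV. (if (k, True) \<in> X then 1 else 0) + (if (k, False) \<in> X then 1 else 0))"
    by (simp add: UNIV_bool add.commute)
  finally show ?thesis .
qed

lemma inner_eset:
  fixes S B :: "('n::finite \<times> bool) set"
  shows "eset S \<bullet> eset B = real (card (S \<inter> B)) - real (card (barset S \<inter> B))"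
proof -
  have "eset S \<bullet> eset B = (\<Sum>k\<in>UNIV.
      ((if (k, True) \<in> S \<inter> B then 1 else 0) + (if (k, False) \<in> S \<inter> B then 1 else 0))
    - ((if (k, True) \<in> barset S \<inter> B then 1 else 0) + (if (k, False) \<in> barset S \<inter> B then 1 else 0)))"
    unfolding inner_vec_def by (rule sum.cong) (auto simp: eset_nth)
  then show ?thesis
    by (simp only: real_card_eq_sum_pairs sum_subtractf)
qed

lemma eset_add_eset:
  assumes "admissible S" "admissible T"
  shows "eset S + eset T = eset (S \<inter> T) + eset (sqcup S T)"
proof (rule vec_eq_iff[THEN iffD2], rule allI)
  fix k
  have "\<not> ((k, True) \<in> S \<and> (k, False) \<in> S)" "\<not> ((k, True) \<in> T \<and> (k, False) \<in> T)"
    using assms unfolding admissible_iff by blast+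
  then show "(eset S + eset T) $ k = (eset (S \<inter> T) + eset (sqcup S T)) $ k"
    unfolding vector_add_component eset_nth sqcup_def by auto
qed

lemma eset_nth_range: "admissible S \<Longrightarrow> eset S $ k \<in> {-1, 0, 1}"
  unfolding eset_nth admissible_iff by auto

lemma eset_nth_subset: "S \<subseteq> T \<Longrightarrow> admissible T \<Longrightarrow> eset S $ k \<noteq> 0 \<Longrightarrow> eset T $ k = eset S $ k"
  unfolding eset_nth admissible_iff by (auto split: if_splits)

section \<open>Sign vectors\<close>

definition sign_vector :: "real^'n \<Rightarrow> bool" where
  "sign_vector p \<longleftrightarrow> (\<forall>k. p$k = 1 \<or> p$k = -1)"

definition flip :: "'n \<Rightarrow> 'n \<Rightarrow> real^'n \<Rightarrow> real^'n" where
  "flip i j p = (\<chi> k. if k = i \<or> k = j then - p$k else p$k)"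

lemma flip_nth [simp]: "flip i j p $ k = (if k = i \<or> k = j then - p$k else p$k)"
  by (simp add: flip_def)

lemma sign_vector_eset_transversal: "sign_vector (eset (transversal s))"
  by (simp add: sign_vector_def eset_transversal_nth)

lemma flip_eset_transversal:
  "flip i j (eset (transversal s)) = eset (transversal (s(i := \<not> s i, j := \<not> s j)))"
  by (simp add: vec_eq_iff eset_transversal_nth)

lemma sign_vector_nth_neq: "sign_vector p \<Longrightarrow> sign_vector q \<Longrightarrow> q$k \<noteq> p$k \<Longrightarrow> q$k = - p$k"
  unfolding sign_vector_def by (metis minus_minus)

lemma sign_vector_eq_flip:
  assumes "sign_vector p" "sign_vector r" "\<And>k. r$k \<noteq> p$k \<longleftrightarrow> k = i \<or> k = j"
  shows "r = flip i j p"
  unfolding vec_eq_iff using assms sign_vector_nth_neq by auto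

lemma inner_sign_vector_self: "sign_vector (p :: real^'n::finite) \<Longrightarrow> p \<bullet> p = real CARD('n)"
proof -
  assume "sign_vector p"
  then have "p$k * p$k = 1" for k
    unfolding sign_vector_def by (metis mult_1 mult_minus1 minus_minus)
  then show ?thesis
    by (simp add: inner_vec_def)
qed

lemma inner_sign_vector_le:
  assumes "sign_vector (p :: real^'n::finite)" "sign_vector q" "p \<noteq> q"
  shows "p \<bullet> q \<le> real CARD('n) - 2"
proof -
  obtain k0 where k0: "p$k0 \<noteq> q$k0"
    using assms(3) by (metis vec_eq_iff)
  have le_1: "p$k * q$k \<le> 1" for k
    using assms(1,2) unfolding sign_vector_def by (metis mult_1 mult_minus1 minus_minus order_refl
      le_minus_one_simps(2) le_minus_one_simps(4) one_neq_neg_one)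
  have "p \<bullet> q = p$k0 * q$k0 + (\<Sum>k\<in>UNIV - {k0}. p$k * q$k)"
    by (simp add: inner_vec_def sum.remove)
  also have "p$k0 * q$k0 = -1"
    using assms(1,2) k0 unfolding sign_vector_def by (metis mult_1 mult_minus1 minus_minus)
  also have "(\<Sum>k\<in>UNIV - {k0}. p$k * q$k) \<le> (\<Sum>k\<in>UNIV - {k0}. 1)"
    by (rule sum_mono) (use le_1 in auto)
  also have "(\<Sum>k\<in>UNIV - {k0}. (1::real)) = real CARD('n) - 1"
    by (simp add: card_Diff_singleton of_nat_diff)
  finally show ?thesis
    by simp
qed

lemma sign_vector_extreme_point:
  fixes V :: "(real^'n::finite) set"
  assumes "finite V" "\<forall>p\<in>V. sign_vector p" "p \<in> V"
  shows "p extreme_point_of convex hull V"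
proof -
  have "convex hull (V - {p}) \<subseteq> {x. p \<bullet> x \<le> real CARD('n) - 2}"
    by (rule hull_minimal) (use assms inner_sign_vector_le in \<open>auto simp: convex_halfspace_le\<close>)
  moreover have "p \<bullet> p = real CARD('n)"
    using assms inner_sign_vector_self by blast
  ultimately have "p \<notin> convex hull (V - {p})"
    by force
  then have "p extreme_point_of convex hull (insert p (V - {p}))"
    using extreme_point_of_convex_hull_insert assms(1) by blast
  then show ?thesis
    using assms(3) by (simp add: insert_absorb)
qed

lemma inner_flip:
  fixes p w :: "real^'n::finite"
  shows "w \<bullet> flip i j p = w \<bullet> p - 2 * (w$i * p$i) - (if j = i then 0 else 2 * (w$j * p$j))"
proof -
  have "w \<bullet> flip i j p - w \<bullet> p = (\<Sum>k\<in>UNIV. w$k * (flip i j p $ k - p$k))"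
    by (simp add: inner_vec_def sum_subtractf algebra_simps)
  also have "\<dots> = (\<Sum>k\<in>{i, j}. w$k * (flip i j p $ k - p$k))"
    by (rule sum.mono_neutral_right) auto
  also have "\<dots> = - 2 * (w$i * p$i) - (if j = i then 0 else 2 * (w$j * p$j))"
    by (cases "j = i") auto
  finally show ?thesis
    by simp
qed

lemma inner_diff_sign_vectors:
  fixes p q u :: "real^'n::finite"
  assumes "sign_vector p" "sign_vector q"
  shows "u \<bullet> q - u \<bullet> p = (\<Sum>k | p$k \<noteq> q$k. - 2 * (u$k * p$k))"
proof -
  have "u \<bullet> q - u \<bullet> p = (\<Sum>k\<in>UNIV. u$k * (q$k - p$k))"
    by (simp add: inner_vec_def sum_subtractf algebra_simps)
  also have "\<dots> = (\<Sum>k | p$k \<noteq> q$k. u$k * (q$k - p$k))"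
    by (rule sum.mono_neutral_right) auto
  also have "\<dots> = (\<Sum>k | p$k \<noteq> q$k. - 2 * (u$k * p$k))"
  proof (rule sum.cong)
    fix k
    assume "k \<in> {k. p$k \<noteq> q$k}"
    then have "q$k = - p$k"
      using sign_vector_nth_neq[OF assms] by simp
    then show "u$k * (q$k - p$k) = - 2 * (u$k * p$k)"
      by simp
  qed simp
  finally show ?thesis .
qed

lemma flip_notin_closed_segment:
  assumes "sign_vector p" "sign_vector q" "p$i \<noteq> q$i" "3 \<le> card {k. p$k \<noteq> q$k}"
  shows "flip i j p \<notin> closed_segment p q"
proof
  assume "flip i j p \<in> closed_segment p q"
  then obtain t where t: "flip i j p = (1 - t) *\<^sub>R p + t *\<^sub>R q"
    unfolding closed_segment_def by blast
  have "card {i, j} \<le> 2"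
    by (simp add: card_insert_if)
  then have "\<not> {k. p$k \<noteq> q$k} \<subseteq> {i, j}"
    using assms(4) card_mono[of "{i, j}" "{k. p$k \<noteq> q$k}"] by auto
  then obtain k where k: "p$k \<noteq> q$k" "k \<noteq> i" "k \<noteq> j"
    by blast
  have "q$i = - p$i" "q$k = - p$k"
    using sign_vector_nth_neq[OF assms(1,2)] assms(3) k(1) by metis+
  moreover have "p$i \<noteq> 0" "p$k \<noteq> 0"
    using assms(1) unfolding sign_vector_def by (metis zero_neq_neg_one zero_neq_one)+
  moreover have "flip i j p $ i = (1 - t) * p$i + t * q$i" "flip i j p $ k = (1 - t) * p$k + t * q$k"
    unfolding t by simp_all
  ultimately have "t = 1" "t = 0"
    using k(2,3) by (auto simp: algebra_simps)
  then show False
    by simp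
qed

section \<open>Improving edges of polytopes\<close>

lemma polytope_extreme_point_in_edge:
  fixes P :: "'a::euclidean_space set"
  assumes "polytope P" "v extreme_point_of P" "aff_dim P \<ge> 1"
  obtains E where "E edge_of P" "v \<in> E"
proof -
  have "\<exists>E. E edge_of P \<and> v \<in> E" if "nat (aff_dim P) = m" "polytope P" "v extreme_point_of P"
    "aff_dim P \<ge> 1" for m P
    using that
  proof (induction m arbitrary: P rule: less_induct)
    case (less m P)
    show ?case
    proof (cases "aff_dim P = 1")
      case True
      then show ?thesis
        using less.prems by (metis edge_of_def extreme_point_of_def face_of_refl polytope_imp_convex)
    next
      case False
      then have dim: "aff_dim P \<ge> 2"
        using less.prems by linarith
      have "{v} face_of P" "{v} \<noteq> P"
        using less.prems dim face_of_singleton by fastforce+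
      then obtain F where F: "F facet_of P" "{v} \<subseteq> F"
        using face_of_polyhedron_subset_facet[OF polytope_imp_polyhedron[OF less.prems(2)]] by blast
      then have "F face_of P" "aff_dim F = aff_dim P - 1"
        by (auto simp: facet_of_def)
      moreover have "polytope F" "v extreme_point_of F"
        using calculation(1) less.prems(2,3) F(2) face_of_polytope_polytope extreme_point_of_face
        by blast+
      ultimately obtain E where "E edge_of F" "v \<in> E"
        using less.IH[of "nat (aff_dim F)" F] dim less.prems(1) by fastforce
      then show ?thesis
        using \<open>F face_of P\<close> face_of_trans by (auto simp: edge_of_def)
    qed
  qed
  then show ?thesis
    using assms that by blast
qed

lemma edge_of_convex_hull:
  fixes V :: "'a::euclidean_space set"
  assumes "finite V" "E edge_of convex hull V"
  obtains p q where "p \<in> V" "q \<in> V" "p \<noteq> q" "E = closed_segment p q"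
proof -
  have face: "E face_of convex hull V" and dim: "aff_dim E = 1"
    using assms(2) by (auto simp: edge_of_def)
  have "compact E"
    using face assms(1) by (meson convex_convex_hull face_of_imp_compact finite_imp_compact
      compact_convex_hull)
  moreover have "convex E" "collinear E" "E \<noteq> {}"
    using face dim face_of_imp_convex collinear_aff_dim by fastforce+
  ultimately obtain p q where E: "E = closed_segment p q"
    using compact_convex_collinear_segment by blast
  have "p extreme_point_of E" "q extreme_point_of E"
    unfolding E by (simp_all add: extreme_point_of_segment)
  then have "p \<in> V" "q \<in> V"
    using face extreme_point_of_face extreme_point_of_convex_hull by blast+
  moreover have "p \<noteq> q"
    using dim E by auto
  ultimately show thesis
    using that E by blast
qed

lemma edge_of_convex_hull_at:
  fixes V :: "'a::euclidean_space set"
  assumes "finite V" "E edge_of convex hull V" "p extreme_point_of convex hull V" "p \<in> E"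
  obtains q where "q \<in> V" "q \<noteq> p" "E = closed_segment p q"
proof -
  obtain a b where ab: "a \<in> V" "b \<in> V" "a \<noteq> b" "E = closed_segment a b"
    using edge_of_convex_hull assms(1,2) by blast
  have "p extreme_point_of closed_segment a b"
    using assms(2-4) ab(4) extreme_point_of_face by (auto simp: edge_of_def)
  then have "p = a \<or> p = b"
    by (simp add: extreme_point_of_segment)
  then show thesis
    using that ab closed_segment_commute by metis
qed

lemma face_of_convex_hull_exposing:
  fixes V :: "'a::euclidean_space set"
  assumes "finite V" "E face_of convex hull V"
  obtains u b where "\<And>x. x \<in> E \<Longrightarrow> u \<bullet> x = b" "\<And>y. y \<in> V \<Longrightarrow> y \<notin> E \<Longrightarrow> u \<bullet> y < b"
proof -
  have "E exposed_face_of convex hull V"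
    using assms exposed_face_of_polyhedron polytope_imp_polyhedron polytope_convex_hull by blast
  then obtain u b where ub: "convex hull V \<subseteq> {x. u \<bullet> x \<le> b}" "E = convex hull V \<inter> {x. u \<bullet> x = b}"
    unfolding exposed_face_of_def by blast
  have "u \<bullet> y < b" if "y \<in> V" "y \<notin> E" for y
  proof -
    have "y \<in> convex hull V"
      using that(1) by (rule hull_inc)
    then have "u \<bullet> y \<le> b" "u \<bullet> y \<noteq> b"
      using ub that(2) by blast+
    then show ?thesis
      by simp
  qed
  then show thesis
    using that ub(2) by blast
qed

text \<open>The witness is u = a + t w with t the largest value keeping p a maximiser of u;
  a point r0 at which this bound is attained is a second maximiser.\<close>

lemma exists_tilted_functional:
  fixes V :: "'a::real_inner set"
  assumes "finite V" "p \<in> V" "\<And>r. r \<in> V \<Longrightarrow> r \<noteq> p \<Longrightarrow> a \<bullet> r < a \<bullet> p"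
    and "q \<in> V" "w \<bullet> p < w \<bullet> q"
  obtains u r0 where "\<And>r. r \<in> V \<Longrightarrow> u \<bullet> r \<le> u \<bullet> p"
    "\<And>r. r \<in> V \<Longrightarrow> u \<bullet> r = u \<bullet> p \<Longrightarrow> r = p \<or> w \<bullet> p < w \<bullet> r"
    "r0 \<in> V" "r0 \<noteq> p" "u \<bullet> r0 = u \<bullet> p"
proof -
  define I where "I = {r \<in> V. w \<bullet> p < w \<bullet> r}"
  define f where "f r = (a \<bullet> p - a \<bullet> r) / (w \<bullet> r - w \<bullet> p)" for r
  define t where "t = Min (f ` I)"
  have "finite I" "I \<noteq> {}"
    using assms(1,4,5) unfolding I_def by auto
  then have "t \<in> f ` I" and t_le: "\<And>r. r \<in> I \<Longrightarrow> t \<le> f r"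
    unfolding t_def by simp_all
  then obtain r0 where r0: "r0 \<in> I" "f r0 = t"
    by blast
  have "r0 \<noteq> p"
    using r0(1) unfolding I_def by auto
  then have t_pos: "0 < t"
    using r0 assms(3)[of r0] unfolding I_def f_def by auto
  define u where "u = a + t *\<^sub>R w"
  have u_diff: "u \<bullet> r - u \<bullet> p = (w \<bullet> r - w \<bullet> p) * (t - f r)" if "r \<in> I" for r
    using that unfolding I_def u_def f_def by (auto simp: inner_add_left field_simps)
  have "u \<bullet> r < u \<bullet> p" if "r \<in> V" "r \<notin> I" "r \<noteq> p" for r
  proof -
    have "t * (w \<bullet> r) \<le> t * (w \<bullet> p)"
      using that(1,2) t_pos unfolding I_def by (simp add: mult_left_mono)
    then show ?thesis
      using assms(3)[OF that(1,3)] unfolding u_def by (simp add: inner_add_left)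
  qed
  moreover have "u \<bullet> r \<le> u \<bullet> p" if "r \<in> I" for r
  proof -
    have "(w \<bullet> r - w \<bullet> p) * (t - f r) \<le> 0"
      using t_le[OF that] that unfolding I_def by (simp add: mult_nonneg_nonpos)
    then show ?thesis
      using u_diff[OF that] by simp
  qed
  moreover have "u \<bullet> r0 = u \<bullet> p"
    using u_diff[OF r0(1)] r0(2) by simp
  ultimately show thesis
    using that[of u r0] r0(1) \<open>r0 \<noteq> p\<close> unfolding I_def by force
qed

lemma exists_improving_face:
  fixes V :: "'a::euclidean_space set"
  assumes "finite V" "p extreme_point_of convex hull V" "q \<in> V" "w \<bullet> p < w \<bullet> q"
  obtains G where "G face_of convex hull V" "p \<in> G" "aff_dim G \<ge> 1"
    "\<And>r. r \<in> V \<Longrightarrow> r \<in> G \<Longrightarrow> r \<noteq> p \<Longrightarrow> w \<bullet> p < w \<bullet> r"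
proof -
  have "p \<in> V"
    using assms(2) extreme_point_of_convex_hull by blast
  have "{p} face_of convex hull V"
    using assms(2) face_of_singleton by blast
  then obtain a b where "a \<bullet> p = b" "\<And>r. r \<in> V \<Longrightarrow> r \<notin> {p} \<Longrightarrow> a \<bullet> r < b"
    using face_of_convex_hull_exposing assms(1) by (metis singletonI)
  then have a_less: "a \<bullet> r < a \<bullet> p" if "r \<in> V" "r \<noteq> p" for r
    using that by blast
  obtain u r0 where u_le: "\<And>r. r \<in> V \<Longrightarrow> u \<bullet> r \<le> u \<bullet> p"
    and u_eq: "\<And>r. r \<in> V \<Longrightarrow> u \<bullet> r = u \<bullet> p \<Longrightarrow> r = p \<or> w \<bullet> p < w \<bullet> r"
    and r0: "r0 \<in> V" "r0 \<noteq> p" "u \<bullet> r0 = u \<bullet> p"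
    using exists_tilted_functional[OF assms(1) \<open>p \<in> V\<close> a_less assms(3,4)] by blast
  define P where "P = convex hull V"
  define G where "G = P \<inter> {x. u \<bullet> x = u \<bullet> p}"
  have "P \<subseteq> {x. u \<bullet> x \<le> u \<bullet> p}"
    unfolding P_def by (rule hull_minimal) (use u_le in \<open>auto simp: convex_halfspace_le\<close>)
  then have "G face_of P"
    unfolding G_def by (intro face_of_Int_supporting_hyperplane_le) (auto simp: P_def)
  moreover have "p \<in> G" "r0 \<in> G"
    using \<open>p \<in> V\<close> r0 hull_inc[where P=convex] unfolding G_def P_def by auto
  moreover have "aff_dim G \<ge> 1"
    using aff_dim_subset[of "{p, r0}" G] calculation(2,3) r0(2) by simp
  ultimately show thesis
    using that u_eq unfolding G_def P_def by blast
qed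

lemma exists_improving_edge:
  fixes V :: "'a::euclidean_space set"
  assumes "finite V" "p extreme_point_of convex hull V" "q \<in> V" "w \<bullet> p < w \<bullet> q"
  obtains r where "closed_segment p r edge_of convex hull V" "r \<in> V" "w \<bullet> p < w \<bullet> r"
proof -
  obtain G where G: "G face_of convex hull V" "p \<in> G" "aff_dim G \<ge> 1"
    and improving: "\<And>r. r \<in> V \<Longrightarrow> r \<in> G \<Longrightarrow> r \<noteq> p \<Longrightarrow> w \<bullet> p < w \<bullet> r"
    using exists_improving_face assms by blast
  have "polytope G" "p extreme_point_of G"
    using G assms(1,2) face_of_polytope_polytope polytope_convex_hull extreme_point_of_face
    by blast+
  then obtain E where "E edge_of G" "p \<in> E"
    using polytope_extreme_point_in_edge G(3) by blast
  then have E: "E edge_of convex hull V" "E \<subseteq> G"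
    using G(1) face_of_trans face_of_imp_subset unfolding edge_of_def by blast+
  then obtain r where "r \<in> V" "r \<noteq> p" "E = closed_segment p r"
    using edge_of_convex_hull_at assms(1,2) \<open>p \<in> E\<close> by blast
  then show thesis
    using that E improving by auto
qed

lemma parallel_to_closed_segment: "parallel_to (closed_segment p q) d \<longleftrightarrow> (\<exists>c. q - p = c *\<^sub>R d)"
proof
  assume "parallel_to (closed_segment p q) d"
  then show "\<exists>c. q - p = c *\<^sub>R d"
    unfolding parallel_to_def by simp
next
  assume "\<exists>c. q - p = c *\<^sub>R d"
  then obtain c where c: "q - p = c *\<^sub>R d" ..
  have "x - y = ((s - t) * c) *\<^sub>R d" if "x = (1 - s) *\<^sub>R p + s *\<^sub>R q" "y = (1 - t) *\<^sub>R p + t *\<^sub>R q"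
    for x y s t
  proof -
    have "x - y = (s - t) *\<^sub>R (q - p)"
      unfolding that by (simp add: scaleR_diff_left scaleR_diff_right algebra_simps)
    then show ?thesis
      using c by simp
  qed
  then show "parallel_to (closed_segment p q) d"
    unfolding parallel_to_def closed_segment_def by blast
qed

section \<open>Polytopes with delta-matroid edge directions\<close>

definition delta_direction :: "real^'n \<Rightarrow> bool" where
  "delta_direction d \<longleftrightarrow> (\<exists>i. d = axis i 1) \<or>
     (\<exists>i j. i \<noteq> j \<and> (d = axis i 1 + axis j 1 \<or> d = axis i 1 - axis j 1))"

definition delta_polytope :: "(real^'n) set \<Rightarrow> bool" where
  "delta_polytope P \<longleftrightarrow> (\<forall>E. E edge_of P \<longrightarrow> (\<exists>d. delta_direction d \<and> parallel_to E d))"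

lemma delta_matroid_iff:
  "delta_matroid F \<longleftrightarrow> F \<noteq> {} \<and> (\<forall>B\<in>F. admissible B \<and> card B = CARD('n)) \<and>
     delta_polytope (convex hull (eset ` F))"
  for F :: "('n::finite \<times> bool) set set"
  unfolding delta_matroid_def delta_polytope_def delta_direction_def is_poly_edge_def edge_of_def
  by blast

lemma delta_direction_support:
  assumes "delta_direction (d :: real^'n)"
  obtains i j where "\<And>k. d$k \<noteq> 0 \<longleftrightarrow> k = i \<or> k = j"
  using assms unfolding delta_direction_def
proof (elim disjE exE conjE)
  fix i
  assume "d = axis i 1"
  then show thesis
    using that[of i i] by (auto simp: axis_def)
next
  fix i j
  assume "i \<noteq> j" "d = axis i 1 + axis j 1"
  then show thesis
    using that[of i j] by (auto simp: axis_def)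
next
  fix i j
  assume "i \<noteq> j" "d = axis i 1 - axis j 1"
  then show thesis
    using that[of i j] by (auto simp: axis_def)
qed

lemma delta_direction_flip:
  assumes "sign_vector p" "sign_vector r" "r \<noteq> p" "r - p = c *\<^sub>R d" "delta_direction d"
  obtains i j where "r = flip i j p"
proof -
  obtain i j where ij: "\<And>k. d$k \<noteq> 0 \<longleftrightarrow> k = i \<or> k = j"
    using delta_direction_support assms(5) by blast
  have "c \<noteq> 0"
    using assms(3,4) by auto
  moreover have "r$k - p$k = c * d$k" for k
    using arg_cong[OF assms(4), of "\<lambda>v. v$k"] by simp
  ultimately have "r$k \<noteq> p$k \<longleftrightarrow> k = i \<or> k = j" for k
    using ij[of k] by (metis eq_iff_diff_eq_0 mult_eq_0_iff)
  then show thesis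
    using sign_vector_eq_flip assms(1,2) that by blast
qed

lemma delta_polytope_improving_flip:
  fixes V :: "(real^'n::finite) set"
  assumes "finite V" "\<forall>p\<in>V. sign_vector p" "delta_polytope (convex hull V)"
    and "p \<in> V" "q \<in> V" "w \<bullet> p < w \<bullet> q"
  obtains i j where "flip i j p \<in> V" "w \<bullet> p < w \<bullet> flip i j p"
proof -
  obtain r where r: "closed_segment p r edge_of convex hull V" "r \<in> V" "w \<bullet> p < w \<bullet> r"
    using exists_improving_edge sign_vector_extreme_point assms by metis
  then obtain d c where "delta_direction d" "r - p = c *\<^sub>R d"
    using assms(3) parallel_to_closed_segment unfolding delta_polytope_def by blast
  moreover have "r \<noteq> p"
    using r(3) by auto
  ultimately obtain i j where "r = flip i j p"
    using delta_direction_flip assms(2,4) r(2) by metis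
  then show thesis
    using that r by blast
qed

lemma improving_flip_nested:
  fixes a a' p :: "real^'n::finite"
  assumes a: "\<And>k. a$k \<in> {-1, 0, 1}" and a': "\<And>k. a'$k \<in> {-1, 0, 1}"
    and nested: "\<And>k. a$k \<noteq> 0 \<Longrightarrow> a'$k = a$k" and "sign_vector p"
    and improving: "a \<bullet> p < a \<bullet> flip i j p \<or> a' \<bullet> p < a' \<bullet> flip i j p"
  shows "(a + a') \<bullet> p < (a + a') \<bullet> flip i j p"
proof -
  define x where "x k = a$k * p$k" for k
  define y where "y k = a'$k * p$k" for k
  define x2 where "x2 = (if j = i then 0 else x j)"
  define y2 where "y2 = (if j = i then 0 else y j)"
  have p_sign: "p$k \<in> {-1, 1}" for k
    using assms(4) unfolding sign_vector_def by auto
  have xy: "x k \<in> {-1, 0, 1}" "y k \<in> {-1, 0, 1}" "x k \<noteq> 0 \<Longrightarrow> y k = x k" for k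
    using a[of k] a'[of k] nested[of k] p_sign[of k] unfolding x_def y_def by auto
  then have xy2: "x2 \<in> {-1, 0, 1}" "y2 \<in> {-1, 0, 1}" "x2 \<noteq> 0 \<Longrightarrow> y2 = x2"
    unfolding x2_def y2_def by auto
  have a_flip: "a \<bullet> flip i j p = a \<bullet> p - 2 * (x i + x2)"
    and a'_flip: "a' \<bullet> flip i j p = a' \<bullet> p - 2 * (y i + y2)"
    unfolding inner_flip x_def y_def x2_def y2_def by auto
  then have "x i + x2 < 0 \<or> y i + y2 < 0"
    using improving by auto
  then have "(x i + x2) + (y i + y2) < 0"
    using xy[of i] xy2 by auto
  then show ?thesis
    unfolding inner_add_left a_flip a'_flip by simp
qed

lemma delta_polytope_common_maximizer:
  fixes V :: "(real^'n::finite) set" and a a' :: "real^'n"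
  assumes "finite V" "V \<noteq> {}" "\<forall>p\<in>V. sign_vector p" "delta_polytope (convex hull V)"
    and a: "\<And>k. a$k \<in> {-1, 0, 1}" and a': "\<And>k. a'$k \<in> {-1, 0, 1}"
    and nested: "\<And>k. a$k \<noteq> 0 \<Longrightarrow> a'$k = a$k"
  obtains p where "p \<in> V" "\<And>q. q \<in> V \<Longrightarrow> a \<bullet> q \<le> a \<bullet> p \<and> a' \<bullet> q \<le> a' \<bullet> p"
proof -
  have "Max ((\<lambda>q. (a + a') \<bullet> q) ` V) \<in> (\<lambda>q. (a + a') \<bullet> q) ` V"
    using assms(1,2) by (intro Max_in) auto
  then obtain p where p: "p \<in> V" "(a + a') \<bullet> p = Max ((\<lambda>q. (a + a') \<bullet> q) ` V)"
    by force
  then have p_max: "(a + a') \<bullet> q \<le> (a + a') \<bullet> p" if "q \<in> V" for q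
    using assms(1) that by simp
  have "a \<bullet> q \<le> a \<bullet> p \<and> a' \<bullet> q \<le> a' \<bullet> p" if q: "q \<in> V" for q
  proof (rule ccontr)
    assume "\<not> (a \<bullet> q \<le> a \<bullet> p \<and> a' \<bullet> q \<le> a' \<bullet> p)"
    then obtain w where w: "w = a \<or> w = a'" "w \<bullet> p < w \<bullet> q"
      by force
    then obtain i j where "flip i j p \<in> V" "w \<bullet> p < w \<bullet> flip i j p"
      using delta_polytope_improving_flip[OF assms(1,3,4) p(1) q] by blast
    then show False
      using improving_flip_nested[OF a a' nested, of p i j] p_max assms(3) p(1) w(1)
      by fastforce
  qed
  then show thesis
    using that p(1) by blast
qed

definition flip_exchange :: "(real^'n) set \<Rightarrow> bool" where
  "flip_exchange V \<longleftrightarrow> (\<forall>p\<in>V. \<forall>q\<in>V. \<forall>i. p$i \<noteq> q$i \<longrightarrow> (\<exists>j. p$j \<noteq> q$j \<and> flip i j p \<in> V))"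

lemma zero_sum_extremes:
  fixes \<alpha> :: "'a \<Rightarrow> real"
  assumes "finite D" "D \<noteq> {}" "sum \<alpha> D = 0"
  obtains i i' where "i \<in> D" "i' \<in> D" "\<And>k. k \<in> D \<Longrightarrow> \<alpha> i' \<le> \<alpha> k \<and> \<alpha> k \<le> \<alpha> i"
    "\<alpha> i' \<le> 0" "0 \<le> \<alpha> i"
proof -
  have "Max (\<alpha> ` D) \<in> \<alpha> ` D" "Min (\<alpha> ` D) \<in> \<alpha> ` D"
    using assms(1,2) by simp_all
  then obtain i i' where i: "i \<in> D" "\<alpha> i = Max (\<alpha> ` D)" and i': "i' \<in> D" "\<alpha> i' = Min (\<alpha> ` D)"
    by (metis imageE)
  have bounds: "\<alpha> i' \<le> \<alpha> k \<and> \<alpha> k \<le> \<alpha> i" if "k \<in> D" for k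
    using i i' assms(1) that by simp
  have "card D > 0"
    using assms(1,2) by (simp add: card_gt_0_iff)
  moreover have "0 \<le> real (card D) * \<alpha> i" "real (card D) * \<alpha> i' \<le> 0"
    using sum_bounded_above[of D \<alpha> "\<alpha> i"] sum_bounded_below[of D "\<alpha> i'" \<alpha>] bounds assms(3)
    by auto
  ultimately have "\<alpha> i' \<le> 0" "0 \<le> \<alpha> i"
    by (simp_all add: zero_le_mult_iff mult_le_0_iff)
  then show thesis
    using that i(1) i'(1) bounds by blast
qed

text \<open>Let u expose the edge [p, q] and let D be the set of coordinates where p and q
  differ.  If D had at least three elements, every flip of p or q in coordinates of D would
  leave the edge and hence decrease u.  This fails for the exchange partners of p and of q at
  the coordinates of D where flipping p, respectively q, increases u the most, because these
  increases sum to u \<bullet> q - u \<bullet> p = 0 over D.\<close>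

lemma flip_exchange_edge_card_le_2:
  fixes V :: "(real^'n::finite) set"
  assumes "finite V" "\<forall>p\<in>V. sign_vector p" "flip_exchange V"
    and edge: "closed_segment p q edge_of convex hull V" and "p \<in> V" "q \<in> V"
  shows "card {k. p$k \<noteq> q$k} \<le> 2"
proof (rule ccontr)
  define D where "D = {k. p$k \<noteq> q$k}"
  assume "\<not> card {k. p$k \<noteq> q$k} \<le> 2"
  then have D3: "3 \<le> card D"
    unfolding D_def by simp
  obtain u b where on_edge: "\<And>x. x \<in> closed_segment p q \<Longrightarrow> u \<bullet> x = b"
    and off_edge: "\<And>y. y \<in> V \<Longrightarrow> y \<notin> closed_segment p q \<Longrightarrow> u \<bullet> y < b"
    using face_of_convex_hull_exposing assms(1) edge unfolding edge_of_def by metis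
  have up: "u \<bullet> p = b" and uq: "u \<bullet> q = b"
    using on_edge ends_in_segment by blast+
  have partner: "\<exists>j\<in>D. u \<bullet> flip i j x < b" if "x = p \<and> y = q \<or> x = q \<and> y = p" "i \<in> D" for x y i
  proof -
    have xy: "x \<in> V" "y \<in> V" "sign_vector x" "sign_vector y" "x$i \<noteq> y$i" "{k. x$k \<noteq> y$k} = D"
      "closed_segment x y = closed_segment p q"
      using that assms(2,5,6) closed_segment_commute unfolding D_def by auto
    then obtain j where "x$j \<noteq> y$j" "flip i j x \<in> V"
      using assms(3) unfolding flip_exchange_def by blast
    moreover have "flip i j x \<notin> closed_segment p q"
      using flip_notin_closed_segment[OF xy(3-5)] xy(6,7) D3 by simp
    ultimately show ?thesis
      using off_edge xy(6) by blast
  qed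
  define \<alpha> where "\<alpha> k = - 2 * (u$k * p$k)" for k
  have "sum \<alpha> D = 0"
    using inner_diff_sign_vectors[of p q u] assms(2,5,6) up uq unfolding D_def \<alpha>_def by simp
  moreover have "finite D" "D \<noteq> {}"
    using D3 by auto
  ultimately obtain i i' where i: "i \<in> D" "i' \<in> D"
    and bounds: "\<And>k. k \<in> D \<Longrightarrow> \<alpha> i' \<le> \<alpha> k \<and> \<alpha> k \<le> \<alpha> i" and signs: "\<alpha> i' \<le> 0" "0 \<le> \<alpha> i"
    using zero_sum_extremes by blast
  obtain j where "j \<in> D" "u \<bullet> flip i j p < b"
    using partner i(1) by blast
  then have j: "j \<in> D" "\<alpha> i + (if j = i then 0 else \<alpha> j) < 0"
    using up unfolding inner_flip \<alpha>_def by (auto split: if_splits)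
  obtain j' where "j' \<in> D" "u \<bullet> flip i' j' q < b"
    using partner i(2) by blast
  moreover have "q$k = - p$k" if "k \<in> D" for k
    using sign_vector_nth_neq[of p q k] assms(2,5,6) that unfolding D_def by auto
  ultimately have j': "j' \<in> D" "0 < \<alpha> i' + (if j' = i' then 0 else \<alpha> j')"
    using i(2) uq unfolding inner_flip \<alpha>_def by (auto split: if_splits)
  show False
    using j j' bounds[OF j(1)] bounds[OF j'(1)] signs by (auto split: if_splits)
qed

lemma sign_vectors_diff_delta_direction:
  assumes "sign_vector (p :: real^'n::finite)" "sign_vector q" "p \<noteq> q" "card {k. p$k \<noteq> q$k} \<le> 2"
  obtains c d where "delta_direction d" "q - p = c *\<^sub>R d"
proof -
  define D where "D = {k. p$k \<noteq> q$k}"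
  have diff: "(q - p)$k = (if k \<in> D then - 2 * p$k else 0)" for k
    using sign_vector_nth_neq[OF assms(1,2), of k] unfolding D_def by auto
  have p_sign: "p$k = 1 \<or> p$k = -1" for k
    using assms(1) unfolding sign_vector_def by blast
  have "D \<noteq> {}"
    using assms(3) unfolding D_def by (auto simp: vec_eq_iff)
  then have "card D = 1 \<or> card D = 2"
    using assms(4) unfolding D_def[symmetric] by (simp add: card_gt_0_iff le_Suc_eq numeral_2_eq_2)
  then show thesis
  proof
    assume "card D = 1"
    then obtain i where "D = {i}"
      by (auto simp: card_Suc_eq)
    then have "(q - p)$k = ((- 2 * p$i) *\<^sub>R axis i 1)$k" for k
      unfolding diff by (simp add: axis_def)
    then have "q - p = (- 2 * p$i) *\<^sub>R axis i 1"
      using vec_eq_iff by blast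
    then show thesis
      using that unfolding delta_direction_def by blast
  next
    assume "card D = 2"
    then obtain i j where D: "D = {i, j}" "i \<noteq> j"
      by (auto simp: card_Suc_eq numeral_2_eq_2)
    then have "(q - p)$k = ((- 2 * p$i) *\<^sub>R (axis i 1 + (p$i * p$j) *\<^sub>R axis j 1))$k" for k
      unfolding diff using p_sign[of i] by (auto simp: axis_def)
    then have "q - p = (- 2 * p$i) *\<^sub>R (axis i 1 + (p$i * p$j) *\<^sub>R axis j 1)"
      using vec_eq_iff by blast
    moreover have "(p$i * p$j) *\<^sub>R axis j 1 = axis j 1 \<or> (p$i * p$j) *\<^sub>R axis j 1 = - axis j 1"
      using p_sign[of i] p_sign[of j] by auto
    ultimately show thesis
      using that D(2) unfolding delta_direction_def by (metis diff_conv_add_uminus)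
  qed
qed

lemma flip_exchange_imp_delta_polytope:
  fixes V :: "(real^'n::finite) set"
  assumes "finite V" "\<forall>p\<in>V. sign_vector p" "flip_exchange V"
  shows "delta_polytope (convex hull V)"
  unfolding delta_polytope_def
proof (intro allI impI)
  fix E
  assume "E edge_of convex hull V"
  then obtain p q where pq: "p \<in> V" "q \<in> V" "p \<noteq> q" and E: "E = closed_segment p q"
    using edge_of_convex_hull assms(1) by blast
  then have "card {k. p$k \<noteq> q$k} \<le> 2"
    using flip_exchange_edge_card_le_2 assms \<open>E edge_of convex hull V\<close> by blast
  then obtain c d where "delta_direction d" "q - p = c *\<^sub>R d"
    using sign_vectors_diff_delta_direction assms(2) pq by metis
  then show "\<exists>d. delta_direction d \<and> parallel_to E d"
    unfolding E parallel_to_closed_segment by blast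
qed

section \<open>The rank function of a delta-matroid\<close>

lemma rank_g_ge:
  fixes F :: "('n::finite \<times> bool) set set"
  assumes "B \<in> F"
  shows "eset S \<bullet> eset B \<le> real_of_int (rank_g F S)"
proof -
  have "int (card (S \<inter> B)) - int (card (barset S \<inter> B)) \<le> rank_g F S"
    unfolding rank_g_def using assms by (intro Max_ge) auto
  then show ?thesis
    unfolding inner_eset by simp
qed

lemma rank_g_attained:
  assumes "F \<noteq> {}"
  obtains B where "B \<in> F" "real_of_int (rank_g F S) = eset S \<bullet> eset B"
proof -
  have "rank_g F S \<in> (\<lambda>B. int (card (S \<inter> B)) - int (card (barset S \<inter> B))) ` F"
    unfolding rank_g_def using assms by (intro Max_in) auto
  then show thesis
    using that unfolding inner_eset by force
qed

lemma sign_vectors_eset: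
  assumes "\<forall>B\<in>F. admissible B \<and> card B = CARD('n)"
  shows "\<forall>p\<in>eset ` (F :: ('n::finite \<times> bool) set set). sign_vector p"
proof
  fix p
  assume "p \<in> eset ` F"
  then obtain B where "B \<in> F" "p = eset B"
    by blast
  moreover have "B = transversal (\<lambda>k. (k, True) \<in> B)" if "B \<in> F" for B
    using assms that admissible_card_eq_transversal by blast
  ultimately show "sign_vector p"
    by (metis sign_vector_eset_transversal)
qed

lemma rank_g_bisubmodular:
  fixes F :: "('n::finite \<times> bool) set set"
  assumes "delta_matroid F" "admissible S" "admissible T"
  shows "rank_g F (S \<inter> T) + rank_g F (sqcup S T) \<le> rank_g F S + rank_g F T"
proof -
  have F: "F \<noteq> {}" "\<forall>B\<in>F. admissible B \<and> card B = CARD('n)"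
    "delta_polytope (convex hull (eset ` F))"
    using assms(1) unfolding delta_matroid_iff by auto
  have "admissible (S \<inter> T)" "S \<inter> T \<subseteq> sqcup S T"
    using assms(2,3) admissible_subset Int_subset_sqcup by blast+
  then have r: "eset (S \<inter> T) $ k \<in> {-1, 0, 1}" "eset (sqcup S T) $ k \<in> {-1, 0, 1}"
    "eset (S \<inter> T) $ k \<noteq> 0 \<Longrightarrow> eset (sqcup S T) $ k = eset (S \<inter> T) $ k" for k
    using eset_nth_range eset_nth_subset admissible_sqcup by blast+
  have "finite (eset ` F)" "eset ` F \<noteq> {}"
    using F(1) by auto
  then obtain p where "p \<in> eset ` F"
    and p_max: "\<And>q. q \<in> eset ` F \<Longrightarrow>
      eset (S \<inter> T) \<bullet> q \<le> eset (S \<inter> T) \<bullet> p \<and> eset (sqcup S T) \<bullet> q \<le> eset (sqcup S T) \<bullet> p"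
    using delta_polytope_common_maximizer[OF _ _ sign_vectors_eset[OF F(2)] F(3) r] by blast
  then obtain Bp where Bp: "Bp \<in> F" "p = eset Bp"
    by blast
  have rank_at_p: "real_of_int (rank_g F X) = eset X \<bullet> p" if "X = S \<inter> T \<or> X = sqcup S T" for X
  proof -
    obtain B where "B \<in> F" "real_of_int (rank_g F X) = eset X \<bullet> eset B"
      using rank_g_attained F(1) by blast
    then show ?thesis
      using p_max[of "eset B"] rank_g_ge[OF Bp(1), of X] that Bp(2) by fastforce
  qed
  have "eset S \<bullet> p + eset T \<bullet> p = eset (S \<inter> T) \<bullet> p + eset (sqcup S T) \<bullet> p"
    using eset_add_eset[OF assms(2,3)] by (metis inner_add_left)
  then have "real_of_int (rank_g F (S \<inter> T) + rank_g F (sqcup S T)) \<le> real_of_int (rank_g F S + rank_g F T)"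
    using rank_at_p rank_g_ge[OF Bp(1), of S] rank_g_ge[OF Bp(1), of T] Bp(2) by simp
  then show ?thesis
    by linarith
qed

lemma rank_h_empty: "F \<noteq> {} \<Longrightarrow> rank_h F {} = 0"
  unfolding rank_h_def rank_g_def barset_def by (simp add: image_constant_conv)

lemma rank_h_singleton:
  fixes F :: "('n::finite \<times> bool) set set"
  assumes "delta_matroid F" "card S = 1"
  shows "rank_h F S \<in> {0, 1}"
proof -
  have F: "F \<noteq> {}" "\<forall>B\<in>F. admissible B \<and> card B = CARD('n)"
    using assms(1) unfolding delta_matroid_iff by auto
  have "rank_g F S \<in> (\<lambda>B. int (card (S \<inter> B)) - int (card (barset S \<inter> B))) ` F"
    unfolding rank_g_def using F(1) by (intro Max_in) auto
  then obtain B where B: "B \<in> F" "rank_g F S = int (card (S \<inter> B)) - int (card (barset S \<inter> B))"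
    by blast
  then have "B = transversal (\<lambda>k. (k, True) \<in> B)"
    using F(2) admissible_card_eq_transversal by blast
  then have "card (barset S \<inter> B) = 1 - card (S \<inter> B)"
    using card_barset_Int_transversal assms(2) by metis
  moreover have "card (S \<inter> B) \<le> 1"
    using card_mono[of S "S \<inter> B"] assms(2) by (metis card.infinite inf_le1 zero_neq_one)
  ultimately have "rank_h F S = real (card (S \<inter> B))"
    using B(2) assms(2) unfolding rank_h_def by auto
  then show ?thesis
    using \<open>card (S \<inter> B) \<le> 1\<close> by (auto simp: le_Suc_eq)
qed

lemma rank_h_ineq:
  fixes F :: "('n::finite \<times> bool) set set"
  assumes "delta_matroid F" "admissible S" "admissible T"
  shows "rank_h F S + rank_h F T
    \<ge> rank_h F (S \<inter> T) + rank_h F (sqcup S T) + real (card (S \<inter> barset T)) / 2"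
  using rank_g_bisubmodular[OF assms] card_Int_sqcup_le[of S T]
  unfolding rank_h_def by (simp add: field_simps)

section \<open>Delta-matroids from rank functions\<close>

locale delta_rank =
  fixes h :: "('n::finite \<times> bool) set \<Rightarrow> int"
  assumes h_empty: "h {} = 0"
    and h_singleton: "admissible S \<Longrightarrow> card S = 1 \<Longrightarrow> h S \<in> {0, 1}"
    and h_ineq: "admissible S \<Longrightarrow> admissible T \<Longrightarrow>
      real_of_int (h S) + real_of_int (h T)
        \<ge> real_of_int (h (S \<inter> T)) + real_of_int (h (sqcup S T)) + real (card (S \<inter> barset T)) / 2"
begin

lemma h_submodular:
  assumes "admissible (S \<union> T)"
  shows "h (S \<inter> T) + h (S \<union> T) \<le> h S + h T"
proof -
  have "bar x \<notin> T" if "x \<in> S" for x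
    using assms that unfolding admissible_def by (metis UnCI bar_bar)
  then have "S \<inter> barset T = {}"
    using mem_barset by blast
  moreover have "admissible S" "admissible T"
    using assms admissible_subset by blast+
  ultimately have "real_of_int (h S + h T) \<ge> real_of_int (h (S \<inter> T) + h (S \<union> T))"
    using h_ineq[of S T] sqcup_eq_Un[OF assms] by simp
  then show ?thesis
    by linarith
qed

lemma h_insert_bar:
  assumes "admissible S" "a \<notin> S" "bar a \<notin> S"
  shows "2 * h S + 1 \<le> h (insert a S) + h (insert (bar a) S)"
proof -
  have Int: "insert a S \<inter> insert (bar a) S = S"
    and sqcup: "sqcup (insert a S) (insert (bar a) S) = S"
    using assms unfolding sqcup_def admissible_def by auto
  have opposite: "insert a S \<inter> barset (insert (bar a) S) = {a}"
    using assms unfolding admissible_def by (auto simp del: bar_Pair)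
  have "real_of_int (h S) + real_of_int (h S) + 1 / 2
      \<le> real_of_int (h (insert a S)) + real_of_int (h (insert (bar a) S))"
    using h_ineq[OF admissible_insert[of S a] admissible_insert[of S "bar a"]] assms
    unfolding Int sqcup opposite by simp
  then show ?thesis
    by linarith
qed

lemma h_insert_le:
  assumes "admissible S" "a \<notin> S" "bar a \<notin> S"
  shows "h (insert a S) \<le> h S + 1"
proof -
  have "h (S \<inter> {a}) + h (S \<union> {a}) \<le> h S + h {a}"
    using admissible_insert[OF assms(1,3)] by (intro h_submodular) simp
  moreover have "h {a} \<le> 1"
    using h_singleton[of "{a}"] by (force simp: admissible_def)
  ultimately show ?thesis
    using assms(2) h_empty by simp
qed

lemma h_insert_ge:
  assumes "admissible S" "a \<notin> S" "bar a \<notin> S"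
  shows "h S \<le> h (insert a S)"
  using h_insert_bar[OF assms] h_insert_le[of S "bar a"] assms by simp

lemma h_subset_bounds:
  assumes "admissible T" "S \<subseteq> T"
  shows "h S \<le> h T \<and> h T \<le> h S + int (card (T - S))"
proof -
  have "h S \<le> h (S \<union> Z) \<and> h (S \<union> Z) \<le> h S + int (card Z)" if "Z \<subseteq> T - S" for Z
    using finite[of Z] that
  proof (induction Z rule: finite_induct)
    case (insert a Z)
    have "insert a (S \<union> Z) \<subseteq> T"
      using insert.prems assms(2) by blast
    then have "admissible (insert a (S \<union> Z))"
      using admissible_subset[OF assms(1)] by blast
    then have a: "admissible (S \<union> Z)" "a \<notin> S \<union> Z" "bar a \<notin> S \<union> Z"
      using insert admissible_subset unfolding admissible_def by auto
    have "S \<union> insert a Z = insert a (S \<union> Z)" "card (insert a Z) = card Z + 1"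
      using insert.hyps by auto
    then show ?case
      using insert.IH insert.prems h_insert_le[OF a] h_insert_ge[OF a] by auto
  qed simp
  from this[of "T - S"] show ?thesis
    using assms(2) by (simp add: Un_absorb1)
qed

lemma h_mono: "admissible T \<Longrightarrow> S \<subseteq> T \<Longrightarrow> h S \<le> h T"
  using h_subset_bounds by blast

lemma h_le_card: "admissible S \<Longrightarrow> h S \<le> int (card S)"
  using h_subset_bounds[of S "{}"] h_empty by simp

definition independent :: "('n \<times> bool) set \<Rightarrow> bool" where
  "independent I \<longleftrightarrow> admissible I \<and> h I = int (card I)"

lemma independent_subset:
  assumes "independent T" "S \<subseteq> T"
  shows "independent S"
proof -
  have "admissible S"
    using assms admissible_subset unfolding independent_def by blast
  moreover have "h T \<le> h S + int (card (T - S))" "card (T - S) = card T - card S" "card S \<le> card T"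
    using assms h_subset_bounds[of T S] unfolding independent_def
    by (auto simp: card_Diff_subset card_mono)
  ultimately show ?thesis
    using assms(1) h_le_card unfolding independent_def by force
qed

lemma independent_augment_insert:
  assumes "admissible (insert a Y)" "a \<notin> Y" "J \<subseteq> Y" "independent J" "h J = h Y"
  obtains J' where "J \<subseteq> J'" "J' \<subseteq> insert a Y" "independent J'" "h J' = h (insert a Y)"
proof -
  have a: "admissible Y" "bar a \<notin> Y"
    using assms(1) admissible_subset unfolding admissible_def by auto
  consider "h (insert a Y) = h Y" | "h (insert a Y) = h Y + 1"
    using h_insert_le[OF a(1) assms(2) a(2)] h_insert_ge[OF a(1) assms(2) a(2)] by fastforce
  then show thesis
  proof cases
    case 1
    then show thesis
      using that[of J] assms(3-5) by auto
  next
    case 2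
    have "insert a J \<inter> Y = J" "insert a J \<union> Y = insert a Y"
      using assms(2,3) by auto
    then have "h (insert a Y) + h J \<le> h (insert a J) + h Y"
      using h_submodular[of "insert a J" Y] assms(1) by simp
    moreover have "admissible (insert a J)" "a \<notin> J"
      using assms(1-3) admissible_subset[of "insert a Y" "insert a J"] by auto
    ultimately have "independent (insert a J)" "h (insert a J) = h (insert a Y)"
      using 2 assms(4,5) h_le_card[of "insert a J"] unfolding independent_def by auto
    then show thesis
      using that[of "insert a J"] assms(3) by auto
  qed
qed

lemma independent_augment:
  assumes "admissible X" "I \<subseteq> X" "independent I"
  obtains J where "I \<subseteq> J" "J \<subseteq> X" "independent J" "h J = h X"
proof -
  have "\<exists>J. I \<subseteq> J \<and> J \<subseteq> I \<union> Z \<and> independent J \<and> h J = h (I \<union> Z)" if "Z \<subseteq> X - I" for Z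
    using finite[of Z] that
  proof (induction Z rule: finite_induct)
    case empty
    then show ?case
      using assms(3) by auto
  next
    case (insert a Z)
    then obtain J where J: "I \<subseteq> J" "J \<subseteq> I \<union> Z" "independent J" "h J = h (I \<union> Z)"
      by auto
    have "insert a (I \<union> Z) \<subseteq> X" "a \<notin> I \<union> Z"
      using insert assms(2) by auto
    then obtain J' where "J \<subseteq> J'" "J' \<subseteq> insert a (I \<union> Z)" "independent J'"
      "h J' = h (insert a (I \<union> Z))"
      using independent_augment_insert[of a "I \<union> Z" J] J(2-4) admissible_subset[OF assms(1)]
      by blast
    then show ?case
      using J(1) by (intro exI[of _ J']) auto
  qed
  from this[of "X - I"] show thesis
    using that assms(2) by (auto simp: Un_absorb1)
qed

lemma independent_extend:
  assumes "independent I"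
  obtains s where "I \<subseteq> transversal s" "independent (transversal s)"
  using assms
proof (induction "CARD('n) - card I" arbitrary: I rule: less_induct)
  case less
  have adm: "admissible I"
    using less.prems unfolding independent_def by blast
  show thesis
  proof (cases "card I = CARD('n)")
    case True
    then show thesis
      using less.prems admissible_card_eq_transversal[OF adm] by (metis order_refl)
  next
    case False
    then have "card I < CARD('n)"
      using card_admissible_le[OF adm] by simp
    then obtain k where k: "(k, True) \<notin> I" "(k, False) \<notin> I"
      using admissible_card_less adm by blast
    have adm_b: "admissible (insert (k, b) I)" and card_b: "card (insert (k, b) I) = card I + 1"
      for b
      using k adm by (cases b; simp add: admissible_insert)+
    have sum: "2 * h I + 1 \<le> h (insert (k, True) I) + h (insert (k, False) I)"
      using h_insert_bar[OF adm, of "(k, True)"] k by simp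
    have le: "h (insert (k, b) I) \<le> int (card I) + 1" for b
      using h_le_card[OF adm_b[of b]] card_b[of b] by simp
    have "h (insert (k, True) I) = int (card I) + 1 \<or> h (insert (k, False) I) = int (card I) + 1"
      using sum le[of True] le[of False] less.prems unfolding independent_def by linarith
    then obtain b where "h (insert (k, b) I) = int (card I) + 1"
      by blast
    then have "independent (insert (k, b) I)"
      using adm_b[of b] card_b[of b] unfolding independent_def by simp
    moreover have "CARD('n) - card (insert (k, b) I) < CARD('n) - card I"
      using \<open>card I < CARD('n)\<close> card_b by simp
    ultimately show thesis
      using less.hyps less.prems(1) by (meson insert_subset)
  qed
qed

definition bases :: "('n \<times> bool) set set" where
  "bases = {B. independent B \<and> card B = CARD('n)}"

lemma mem_bases_iff: "B \<in> bases \<longleftrightarrow> (\<exists>s. B = transversal s \<and> independent (transversal s))"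
proof
  assume "B \<in> bases"
  then have "independent B" "B = transversal (\<lambda>k. (k, True) \<in> B)"
    using admissible_card_eq_transversal unfolding bases_def independent_def by auto
  then show "\<exists>s. B = transversal s \<and> independent (transversal s)"
    by metis
next
  assume "\<exists>s. B = transversal s \<and> independent (transversal s)"
  then show "B \<in> bases"
    unfolding bases_def by auto
qed

lemma rank_h_bases:
  assumes "admissible S"
  shows "rank_h bases S = real_of_int (h S)"
proof -
  define t where "t B = int (card (S \<inter> B)) - int (card (barset S \<inter> B))" for B
  have t_eq: "t B = 2 * int (card (S \<inter> B)) - int (card S)" if "B \<in> bases" for B
    using that card_mono[of S "S \<inter> B"]
    unfolding mem_bases_iff t_def by (auto simp: card_barset_Int_transversal)
  have "int (card (S \<inter> B)) \<le> h S" if "B \<in> bases" for B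
    using that independent_subset[of B "S \<inter> B"] h_mono[OF assms, of "S \<inter> B"]
    unfolding bases_def independent_def by auto
  then have upper: "t B \<le> 2 * h S - int (card S)" if "B \<in> bases" for B
    using that t_eq by force
  obtain J where J: "J \<subseteq> S" "independent J" "h J = h S"
    using independent_augment[OF assms, of "{}"] h_empty unfolding independent_def by auto
  then obtain s where s: "J \<subseteq> transversal s" "independent (transversal s)"
    using independent_extend by blast
  then have s_bases: "transversal s \<in> bases"
    unfolding mem_bases_iff by blast
  have "card J \<le> card (S \<inter> transversal s)"
    using J(1) s(1) by (intro card_mono) auto
  then have "t (transversal s) = 2 * h S - int (card S)"
    using upper[OF s_bases] t_eq[OF s_bases] J unfolding independent_def by simp
  then have "Max (t ` bases) = 2 * h S - int (card S)"
    using upper s_bases by (intro Max_eqI) force+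
  then show ?thesis
    unfolding rank_h_def rank_g_def t_def by simp
qed

lemma h_transversal_update_ge:
  assumes "independent (transversal s)"
  shows "int CARD('n) - 1 \<le> h (transversal (s(i := b)))"
proof -
  have "x \<in> transversal (s(i := b))" if "x \<in> transversal s - {(i, s i)}" for x
    using that by (cases x) auto
  then have "h (transversal s - {(i, s i)}) \<le> h (transversal (s(i := b)))"
    by (intro h_mono[OF admissible_transversal]) blast
  moreover have "h (transversal s - {(i, s i)}) = int (card (transversal s - {(i, s i)}))"
    using independent_subset[OF assms] unfolding independent_def by blast
  moreover have "card (transversal s - {(i, s i)}) = CARD('n) - 1" "CARD('n) \<ge> 1"
    by (simp_all add: card_Diff_singleton Suc_leI)
  ultimately show ?thesis
    by linarith
qed

lemma independent_flip_transversal: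
  assumes "h (transversal s) = int CARD('n) - 1" "independent (transversal s - {(j, s j)})"
  shows "independent (transversal (s(j := \<not> s j)))"
proof -
  define J where "J = transversal s - {(j, s j)}"
  have "admissible J"
    unfolding J_def by (rule admissible_subset[OF admissible_transversal]) blast
  moreover have "(j, s j) \<notin> J" "bar (j, s j) \<notin> J" "insert (j, s j) J = transversal s"
    unfolding J_def by auto
  ultimately have "2 * h J + 1 \<le> h (transversal s) + h (insert (j, \<not> s j) J)"
    using h_insert_bar[of J "(j, s j)"] by simp
  moreover have "h J = int CARD('n) - 1"
    using assms(2) unfolding J_def independent_def by (simp add: card_Diff_singleton Suc_leI)
  moreover have "x \<in> insert (j, \<not> s j) J \<longleftrightarrow> x \<in> transversal (s(j := \<not> s j))" for x
    unfolding J_def by (cases x) auto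
  then have "insert (j, \<not> s j) J = transversal (s(j := \<not> s j))"
    by blast
  ultimately have "int CARD('n) \<le> h (transversal (s(j := \<not> s j)))"
    using assms(1) by simp
  then show ?thesis
    using h_le_card[OF admissible_transversal] unfolding independent_def by (simp add: eq_iff)
qed

text \<open>If flipping i alone does not give a basis, the flipped transversal has rank n - 1.
  Augmenting the common part of the two bases together with (i, s2 i) inside it leaves out
  exactly one element, and its coordinate is j.\<close>

lemma transversal_exchange:
  assumes "independent (transversal s1)" "independent (transversal s2)" "s1 i \<noteq> s2 i"
  obtains j where "s1 j \<noteq> s2 j" "independent (transversal (s1(i := \<not> s1 i, j := \<not> s1 j)))"
proof (cases "independent (transversal (s1(i := \<not> s1 i)))")
  case True
  then show thesis
    using that[of i] assms(3) by simp
next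
  case False
  define s' where "s' = s1(i := \<not> s1 i)"
  define X where "X = transversal s'"
  have "h X \<le> int CARD('n)" "h X \<noteq> int CARD('n)"
    using False h_le_card[of X] unfolding X_def s'_def independent_def by auto
  then have h_X: "h X = int CARD('n) - 1"
    using h_transversal_update_ge[OF assms(1), of i "\<not> s1 i"] unfolding X_def s'_def by linarith
  define I where "I = (transversal s1 \<inter> transversal s2) \<union> {(i, s2 i)}"
  have "x \<in> X" "x \<in> transversal s2" if "x \<in> I" for x
    using that assms(3) unfolding I_def X_def s'_def by (cases x; auto)+
  then obtain J where J: "I \<subseteq> J" "J \<subseteq> X" "independent J" "h J = h X"
    using independent_augment[of X I] independent_subset[OF assms(2), of I] unfolding X_def
    by (metis admissible_transversal subsetI)
  then have "card (X - J) = 1"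
    using h_X unfolding independent_def X_def by (simp add: card_Diff_subset, linarith)
  then obtain y where y: "X - J = {y}"
    using card_1_singletonE by blast
  obtain j b where "y = (j, b)"
    by (cases y)
  moreover have "y \<in> X"
    using y by blast
  ultimately have y_j: "y = (j, s' j)"
    unfolding X_def by simp
  have "y \<notin> I"
    using y J(1) by blast
  then have j: "j \<noteq> i" "s1 j \<noteq> s2 j"
    using assms(3) unfolding y_j I_def s'_def by auto
  have "J = transversal s' - {(j, s' j)}"
    using y J(2) unfolding y_j X_def by blast
  then have "independent (transversal (s'(j := \<not> s' j)))"
    using independent_flip_transversal h_X J(3) unfolding X_def by blast
  moreover have "s'(j := \<not> s' j) = s1(i := \<not> s1 i, j := \<not> s1 j)"
    using j(1) unfolding s'_def by auto
  ultimately show thesis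
    using that j(2) by auto
qed

lemma flip_exchange_bases: "flip_exchange (eset ` bases)"
  unfolding flip_exchange_def
proof (intro ballI allI impI)
  fix p q i
  assume "p \<in> eset ` bases" "q \<in> eset ` bases" "p$i \<noteq> q$i"
  then obtain s1 s2 where s: "independent (transversal s1)" "independent (transversal s2)"
    "p = eset (transversal s1)" "q = eset (transversal s2)"
    using mem_bases_iff by (metis imageE)
  then have "p$k \<noteq> q$k \<longleftrightarrow> s1 k \<noteq> s2 k" for k
    by (simp add: eset_transversal_nth)
  then obtain j where j: "p$j \<noteq> q$j" "independent (transversal (s1(i := \<not> s1 i, j := \<not> s1 j)))"
    using transversal_exchange[OF s(1,2)] \<open>p$i \<noteq> q$i\<close> by metis
  then have "transversal (s1(i := \<not> s1 i, j := \<not> s1 j)) \<in> bases"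
    unfolding mem_bases_iff by blast
  then show "\<exists>j. p$j \<noteq> q$j \<and> flip i j p \<in> eset ` bases"
    using j(1) unfolding s(3) flip_eset_transversal by blast
qed

lemma delta_matroid_bases: "delta_matroid bases"
proof -
  obtain s where "independent (transversal s)"
    using independent_extend[of "{}"] h_empty unfolding independent_def by auto
  then have "transversal s \<in> bases"
    unfolding mem_bases_iff by blast
  then have "bases \<noteq> {}"
    by blast
  moreover have adm: "\<forall>B\<in>bases. admissible B \<and> card B = CARD('n)"
    unfolding bases_def independent_def by blast
  moreover have "delta_polytope (convex hull (eset ` bases))"
    by (rule flip_exchange_imp_delta_polytope[OF _ sign_vectors_eset[OF adm] flip_exchange_bases])
      simp
  ultimately show ?thesis
    unfolding delta_matroid_iff by blast
qed

end

lemma delta_rank_iff: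
  "delta_rank h \<longleftrightarrow>
     h {} = 0 \<and>
     (\<forall>S. admissible S \<and> card S = 1 \<longrightarrow> h S \<in> {0, 1}) \<and>
     (\<forall>S T. admissible S \<longrightarrow> admissible T \<longrightarrow>
        real_of_int (h S) + real_of_int (h T)
          \<ge> real_of_int (h (S \<inter> T)) + real_of_int (h (sqcup S T)) + real (card (S \<inter> barset T)) / 2)"
  unfolding delta_rank_def by blast

lemma delta_rank_rank_h:
  fixes F :: "('n::finite \<times> bool) set set"
  assumes "delta_matroid F" "\<And>S. admissible S \<Longrightarrow> real_of_int (h S) = rank_h F S"
  shows "delta_rank h"
proof
  have "F \<noteq> {}"
    using assms(1) unfolding delta_matroid_def by blast
  then have "real_of_int (h {}) = 0"
    using assms(2)[of "{}"] rank_h_empty by simp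
  then show "h {} = 0"
    by simp
  show "h S \<in> {0, 1}" if "admissible S" "card S = 1" for S
    using assms(2)[OF that(1)] rank_h_singleton[OF assms(1) that(2)] by auto
  show "real_of_int (h S) + real_of_int (h T)
      \<ge> real_of_int (h (S \<inter> T)) + real_of_int (h (sqcup S T)) + real (card (S \<inter> barset T)) / 2"
    if "admissible S" "admissible T" for S T
    using rank_h_ineq[OF assms(1) that] assms(2) that admissible_subset[of S "S \<inter> T"] by simp
qed

theorem corollary2p9:
  fixes h :: "('n::finite \<times> bool) set \<Rightarrow> int"
  shows "(\<exists>F. delta_matroid F \<and> (\<forall>S. admissible S \<longrightarrow> real_of_int (h S) = rank_h F S))
         \<longleftrightarrow>
         (h {} = 0 \<and>
          (\<forall>S. admissible S \<and> card S = 1 \<longrightarrow> h S \<in> {0, 1}) \<and>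
          (\<forall>S T. admissible S \<longrightarrow> admissible T \<longrightarrow>
              real_of_int (h S) + real_of_int (h T)
                \<ge> real_of_int (h (S \<inter> T)) + real_of_int (h (sqcup S T))
                   + real (card (S \<inter> barset T)) / 2))"
  unfolding delta_rank_iff[symmetric]
proof
  assume "\<exists>F. delta_matroid F \<and> (\<forall>S. admissible S \<longrightarrow> real_of_int (h S) = rank_h F S)"
  then show "delta_rank h"
    using delta_rank_rank_h by blast
next
  assume "delta_rank h"
  then interpret delta_rank h .
  show "\<exists>F. delta_matroid F \<and> (\<forall>S. admissible S \<longrightarrow> real_of_int (h S) = rank_h F S)"
    using delta_matroid_bases rank_h_bases by auto
qed

end
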